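(* Backward proof search in $\mathsf{G4iSLt}$ is strongly terminating: there is no infinite sequence of sequents $S_0,S_1,S_2,\dots$ such that for every $k\ge 0$, $S_{k+1}$ is a premise of some instance of a rule of $\mathsf{G4iSLt}$ whose conclusion is $S_k$. Consequently, for every sequent, every tree obtained by repeatedly applying rules of $\mathsf{G4iSLt}$ backwards in any order is finite.
   Context: Formulas are built by the grammar $\varphi ::= p \mid \bot \mid \varphi\land\varphi \mid \varphi\lor\varphi \mid \varphi\to\varphi \mid \Box\varphi$, with $p$ ranging over a countably infinite set of propositional variables. For a multiset $\Gamma$, $\Box\Gamma=\{\Box\psi:\psi\in\Gamma\}$; a boxed formula is one of the form $\Box\psi$. A sequent is $\Gamma\Rightarrow\chi$ with $\Gamma$ a finite multiset of formulas and $\chi$ a formula. The sequent calculus $\mathsf{G4iSLt}$ has the following rules, where $p$ is a propositional variable and $\Phi$ always denotes a multiset containing no boxed formula: (⊥L) $\bot,\Gamma\Rightarrow\chi$ (no premise); (IdP) $\Gamma,p\Rightarrow p$ (no premise); (∧L) from $\Gamma,\varphi,\psi\Rightarrow\chi$ infer $\Gamma,\varphi\land\psi\Rightarrow\chi$; (∧R) from $\Gamma\Rightarrow\varphi$ and $\Gamma\Rightarrow\psi$ infer $\Gamma\Rightarrow\varphi\land\psi$; (∨L) from $\Gamma,\varphi\Rightarrow\chi$ and $\Gamma,\psi\Rightarrow\chi$ infer $\Gamma,\varphi\lor\psi\Rightarrow\chi$; (∨R$_i$), $i\in\{1,2\}$: from $\Gamma\Rightarrow\varphi_i$ infer $\Gamma\Rightarrow\varphi_1\lor\varphi_2$;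 (p→L) from $\Gamma,p,\varphi\Rightarrow\chi$ infer $\Gamma,p,p\to\varphi\Rightarrow\chi$; (→R) from $\Gamma,\varphi\Rightarrow\psi$ infer $\Gamma\Rightarrow\varphi\to\psi$; (□→L) from $\Phi,\Gamma,\psi,\Box\varphi\Rightarrow\varphi$ and $\Phi,\Box\Gamma,\psi\Rightarrow\chi$ infer $\Phi,\Box\Gamma,\Box\varphi\to\psi\Rightarrow\chi$; (SLtR) from $\Phi,\Gamma,\Box\varphi\Rightarrow\varphi$ infer $\Phi,\Box\Gamma\Rightarrow\Box\varphi$; (∧→L) from $\Gamma,\varphi\to(\psi\to\chi)\Rightarrow\delta$ infer $\Gamma,(\varphi\land\psi)\to\chi\Rightarrow\delta$; (∨→L) from $\Gamma,\varphi\to\chi,\psi\to\chi\Rightarrow\delta$ infer $\Gamma,(\varphi\lor\psi)\to\chi\Rightarrow\delta$; (→→L) from $\Gamma,\psi\to\chi\Rightarrow\varphi\to\psi$ and $\Gamma,\chi\Rightarrow\delta$ infer $\Gamma,(\varphi\to\psi)\to\chi\Rightarrow\delta$. *)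

theory Defs
  imports "HOL-Library.Multiset"
begin

datatype form =
    Atom nat
  | Bot
  | And form form
  | Or form form
  | Imp form form
  | Box form

type_synonym sequent = "form multiset \<times> form"

definition is_boxed :: "form \<Rightarrow> bool" where
  "is_boxed f \<longleftrightarrow> (\<exists>g. f = Box g)"

definition no_boxed :: "form multiset \<Rightarrow> bool" where
  "no_boxed \<Phi> \<longleftrightarrow> (\<forall>f \<in># \<Phi>. \<not> is_boxed f)"

inductive rule_inst :: "sequent list \<Rightarrow> sequent \<Rightarrow> bool" where
  BotL: "rule_inst [] (add_mset Bot \<Gamma>, \<chi>)"
| IdP: "rule_inst [] (add_mset (Atom p) \<Gamma>, Atom p)"
| AndL: "rule_inst [(add_mset \<phi> (add_mset \<psi> \<Gamma>), \<chi>)] (add_mset (And \<phi> \<psi>) \<Gamma>, \<chi>)"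
| AndR: "rule_inst [(\<Gamma>, \<phi>), (\<Gamma>, \<psi>)] (\<Gamma>, And \<phi> \<psi>)"
| OrL: "rule_inst [(add_mset \<phi> \<Gamma>, \<chi>), (add_mset \<psi> \<Gamma>, \<chi>)] (add_mset (Or \<phi> \<psi>) \<Gamma>, \<chi>)"
| OrR1: "rule_inst [(\<Gamma>, \<phi>)] (\<Gamma>, Or \<phi> \<psi>)"
| OrR2: "rule_inst [(\<Gamma>, \<psi>)] (\<Gamma>, Or \<phi> \<psi>)"
| AtImpL: "rule_inst [(add_mset (Atom p) (add_mset \<phi> \<Gamma>), \<chi>)]
                     (add_mset (Atom p) (add_mset (Imp (Atom p) \<phi>) \<Gamma>), \<chi>)"
| ImpR: "rule_inst [(add_mset \<phi> \<Gamma>, \<psi>)] (\<Gamma>, Imp \<phi> \<psi>)"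
| BoxImpL: "no_boxed \<Phi> \<Longrightarrow>
    rule_inst [(\<Phi> + \<Gamma> + {#\<psi>, Box \<phi>#}, \<phi>), (\<Phi> + image_mset Box \<Gamma> + {#\<psi>#}, \<chi>)]
              (\<Phi> + image_mset Box \<Gamma> + {#Imp (Box \<phi>) \<psi>#}, \<chi>)"
| SLtR: "no_boxed \<Phi> \<Longrightarrow>
    rule_inst [(\<Phi> + \<Gamma> + {#Box \<phi>#}, \<phi>)] (\<Phi> + image_mset Box \<Gamma>, Box \<phi>)"
| AndImpL: "rule_inst [(add_mset (Imp \<phi> (Imp \<psi> \<chi>)) \<Gamma>, \<delta>)]
                      (add_mset (Imp (And \<phi> \<psi>) \<chi>) \<Gamma>, \<delta>)"
| OrImpL: "rule_inst [(add_mset (Imp \<phi> \<chi>) (add_mset (Imp \<psi> \<chi>) \<Gamma>), \<delta>)]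
                     (add_mset (Imp (Or \<phi> \<psi>) \<chi>) \<Gamma>, \<delta>)"
| ImpImpL: "rule_inst [(add_mset (Imp \<psi> \<chi>) \<Gamma>, Imp \<phi> \<psi>), (add_mset \<chi> \<Gamma>, \<delta>)]
                      (add_mset (Imp (Imp \<phi> \<psi>) \<chi>) \<Gamma>, \<delta>)"

definition is_premise_of :: "sequent \<Rightarrow> sequent \<Rightarrow> bool" where
  "is_premise_of S' S \<longleftrightarrow> (\<exists>ps. rule_inst ps S \<and> S' \<in> set ps)"

text \<open>A backward proof-search tree with root S, represented by positions
  (lists of child indices) mapped to sequents.\<close>
definition search_tree :: "sequent \<Rightarrow> (nat list \<Rightarrow> sequent option) \<Rightarrow> bool" where
  "search_tree S T \<longleftrightarrow>
     T [] = Some S \<and>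
     (\<forall>p i. T (p @ [i]) \<noteq> None \<longrightarrow> T p \<noteq> None) \<and>
     (\<forall>p C. T p = Some C \<longrightarrow>
        (\<forall>i. T (p @ [i]) = None) \<or>
        (\<exists>ps. rule_inst ps C \<and>
              (\<forall>i. T (p @ [i]) = (if i < length ps then Some (ps ! i) else None))))"

end

theory Submission
  imports Defs "HOL-Library.Multiset_Order"
begin

text \<open>Every rule of G4iSLt replaces a formula occurrence of a sequent (counting the succedent
  too) by finitely many occurrences of strictly smaller weight, so the multiset of weights
  decreases in the Dershowitz--Manna ordering, which is well-founded. The delicate rules are
  the modal ones: they unbox the antecedent and move \<open>\<box>\<phi>\<close> to the left, but only
  at the price of trading the succedent \<open>\<box>\<phi>\<close> or the implication \<open>\<box>\<phi> \<rightarrow> \<psi>\<close>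
  for strictly lighter occurrences. Well-foundedness of the premise relation excludes infinite
  backward chains, and since rule instances have finitely many premises, a search tree is
  finite by well-founded induction on its root.\<close>

fun weight :: "form \<Rightarrow> nat" where
  "weight (Atom p) = 1"
| "weight Bot = 1"
| "weight (And \<phi> \<psi>) = weight \<phi> + weight \<psi> + 2" \<comment> \<open>so that \<open>(\<phi> \<and> \<psi>) \<rightarrow> \<chi>\<close> outweighs \<open>\<phi> \<rightarrow> (\<psi> \<rightarrow> \<chi>)\<close>\<close>
| "weight (Or \<phi> \<psi>) = weight \<phi> + weight \<psi> + 1"
| "weight (Imp \<phi> \<psi>) = weight \<phi> + weight \<psi> + 1"
| "weight (Box \<phi>) = weight \<phi> + 1"

lemma weight_ge_1: "weight \<phi> \<ge> 1"
  by (induction \<phi>) auto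

definition sequent_measure :: "sequent \<Rightarrow> nat multiset" where
  "sequent_measure S = image_mset weight (fst S) + {#weight (snd S) + 1#}"

lemma less_multiset_replace_dominated:
  fixes I J K :: "'a :: preorder multiset"
  assumes "J \<noteq> {#}" and "\<forall>k\<in>#K. \<exists>j\<in>#J. k < j"
    and "M = I + K" and "N = I + J"
  shows "M < N"
  using one_step_implies_multp[OF assms(1,2), of I] assms(3,4)
  by (simp add: less_multiset_def)

lemma SLtR_premise_measure_less:
  "sequent_measure (\<Phi> + \<Gamma> + {#Box \<phi>#}, \<phi>) < sequent_measure (\<Phi> + image_mset Box \<Gamma>, Box \<phi>)"
proof -
  have "sequent_measure (\<Phi> + image_mset Box \<Gamma>, Box \<phi>)
      = image_mset weight \<Phi> + (image_mset (\<lambda>g. weight g + 1) \<Gamma> + {#weight \<phi> + 2#})"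
    by (simp add: sequent_measure_def multiset.map_comp o_def)
  then show ?thesis
    by (intro less_multiset_replace_dominated[where
        K = "image_mset weight \<Gamma> + {#weight \<phi> + 1, weight \<phi> + 1#}"])
      (auto simp: sequent_measure_def)
qed

lemma BoxImpL_premises_measure_less:
  shows "sequent_measure (\<Phi> + \<Gamma> + {#\<psi>, Box \<phi>#}, \<phi>)
      < sequent_measure (\<Phi> + image_mset Box \<Gamma> + {#Imp (Box \<phi>) \<psi>#}, \<chi>)"
    and "sequent_measure (\<Phi> + image_mset Box \<Gamma> + {#\<psi>#}, \<chi>)
      < sequent_measure (\<Phi> + image_mset Box \<Gamma> + {#Imp (Box \<phi>) \<psi>#}, \<chi>)"
proof -
  have conclusion: "sequent_measure (\<Phi> + image_mset Box \<Gamma> + {#Imp (Box \<phi>) \<psi>#}, \<chi>)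
      = image_mset weight \<Phi> + (image_mset (\<lambda>g. weight g + 1) \<Gamma>
          + {#weight \<phi> + weight \<psi> + 2, weight \<chi> + 1#})"
    by (simp add: sequent_measure_def multiset.map_comp o_def)
  show "sequent_measure (\<Phi> + \<Gamma> + {#\<psi>, Box \<phi>#}, \<phi>)
      < sequent_measure (\<Phi> + image_mset Box \<Gamma> + {#Imp (Box \<phi>) \<psi>#}, \<chi>)"
    using weight_ge_1[of \<psi>]
    by (intro less_multiset_replace_dominated[OF _ _ _ conclusion, where
          K = "image_mset weight \<Gamma> + {#weight \<psi>, weight \<phi> + 1, weight \<phi> + 1#}"])
      (auto simp: sequent_measure_def)
  show "sequent_measure (\<Phi> + image_mset Box \<Gamma> + {#\<psi>#}, \<chi>)
      < sequent_measure (\<Phi> + image_mset Box \<Gamma> + {#Imp (Box \<phi>) \<psi>#}, \<chi>)"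
    by (intro less_multiset_replace_dominated[where
          I = "image_mset weight \<Phi> + image_mset (\<lambda>g. weight g + 1) \<Gamma> + {#weight \<chi> + 1#}"
          and K = "{#weight \<psi>#}" and J = "{#weight \<phi> + weight \<psi> + 2#}"])
      (auto simp: sequent_measure_def multiset.map_comp o_def ac_simps)
qed

lemma rule_inst_premise_measure_less:
  "rule_inst ps S \<Longrightarrow> S' \<in> set ps \<Longrightarrow> sequent_measure S' < sequent_measure S"
proof (induction rule: rule_inst.induct)
  case (AndL \<phi> \<psi> \<Gamma> \<chi>)
  then show ?case
    by (auto simp: sequent_measure_def intro!: less_multiset_replace_dominated[where
          I = "image_mset weight \<Gamma> + {#weight \<chi> + 1#}"
          and K = "{#weight \<phi>, weight \<psi>#}" and J = "{#weight \<phi> + weight \<psi> + 2#}"])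
next
  case (AndR \<Gamma> \<phi> \<psi>)
  then show ?case
    by (auto simp: sequent_measure_def intro!: less_multiset_replace_dominated[where
          I = "image_mset weight \<Gamma>" and J = "{#weight \<phi> + weight \<psi> + 3#}"])
next
  case (OrL \<phi> \<Gamma> \<chi> \<psi>)
  then show ?case
    by (auto simp: sequent_measure_def intro!: less_multiset_replace_dominated[where
          I = "image_mset weight \<Gamma> + {#weight \<chi> + 1#}" and J = "{#weight \<phi> + weight \<psi> + 1#}"])
next
  case (OrR1 \<Gamma> \<phi> \<psi>)
  then show ?case
    by (auto simp: sequent_measure_def intro!: less_multiset_replace_dominated[where
          I = "image_mset weight \<Gamma>" and J = "{#weight \<phi> + weight \<psi> + 2#}"])
next
  case (OrR2 \<Gamma> \<psi> \<phi>)
  then show ?case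
    by (auto simp: sequent_measure_def intro!: less_multiset_replace_dominated[where
          I = "image_mset weight \<Gamma>" and J = "{#weight \<phi> + weight \<psi> + 2#}"])
next
  case (AtImpL p \<phi> \<Gamma> \<chi>)
  then show ?case
    by (auto simp: sequent_measure_def intro!: less_multiset_replace_dominated[where
          I = "image_mset weight \<Gamma> + {#weight \<chi> + 1, 1#}"
          and K = "{#weight \<phi>#}" and J = "{#weight \<phi> + 2#}"])
next
  case (ImpR \<phi> \<Gamma> \<psi>)
  then show ?case
    by (auto simp: sequent_measure_def intro!: less_multiset_replace_dominated[where
          I = "image_mset weight \<Gamma>"
          and K = "{#weight \<phi>, weight \<psi> + 1#}" and J = "{#weight \<phi> + weight \<psi> + 2#}"])
next
  case (BoxImpL \<Phi> \<Gamma> \<psi> \<phi> \<chi>)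
  then show ?case using BoxImpL_premises_measure_less by auto
next
  case (SLtR \<Phi> \<Gamma> \<phi>)
  then show ?case using SLtR_premise_measure_less by simp
next
  case (AndImpL \<phi> \<psi> \<chi> \<Gamma> \<delta>)
  then show ?case
    by (auto simp: sequent_measure_def intro!: less_multiset_replace_dominated[where
          I = "image_mset weight \<Gamma> + {#weight \<delta> + 1#}"
          and K = "{#weight \<phi> + weight \<psi> + weight \<chi> + 2#}"
          and J = "{#weight \<phi> + weight \<psi> + weight \<chi> + 3#}"])
next
  case (OrImpL \<phi> \<chi> \<psi> \<Gamma> \<delta>)
  then show ?case
    by (auto simp: sequent_measure_def intro!: less_multiset_replace_dominated[where
          I = "image_mset weight \<Gamma> + {#weight \<delta> + 1#}"
          and K = "{#weight \<phi> + weight \<chi> + 1, weight \<psi> + weight \<chi> + 1#}"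
          and J = "{#weight \<phi> + weight \<psi> + weight \<chi> + 2#}"])
next
  case (ImpImpL \<psi> \<chi> \<Gamma> \<phi> \<delta>)
  have conclusion: "sequent_measure (add_mset (Imp (Imp \<phi> \<psi>) \<chi>) \<Gamma>, \<delta>)
      = image_mset weight \<Gamma> + {#weight \<phi> + weight \<psi> + weight \<chi> + 2, weight \<delta> + 1#}"
    by (simp add: sequent_measure_def)
  have left: "sequent_measure (add_mset (Imp \<psi> \<chi>) \<Gamma>, Imp \<phi> \<psi>)
      < sequent_measure (add_mset (Imp (Imp \<phi> \<psi>) \<chi>) \<Gamma>, \<delta>)"
    using weight_ge_1[of \<chi>] weight_ge_1[of \<phi>]
    by (intro less_multiset_replace_dominated[OF _ _ _ conclusion,
          where K = "{#weight \<psi> + weight \<chi> + 1, weight \<phi> + weight \<psi> + 2#}"])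
      (auto simp: sequent_measure_def)
  have right: "sequent_measure (add_mset \<chi> \<Gamma>, \<delta>)
      < sequent_measure (add_mset (Imp (Imp \<phi> \<psi>) \<chi>) \<Gamma>, \<delta>)"
    by (auto simp: sequent_measure_def intro!: less_multiset_replace_dominated[where
          I = "image_mset weight \<Gamma> + {#weight \<delta> + 1#}"
          and K = "{#weight \<chi>#}" and J = "{#weight \<phi> + weight \<psi> + weight \<chi> + 2#}"])
  from ImpImpL.prems left right show ?case by auto
qed auto

lemma wf_is_premise_of: "wf {(S', S). is_premise_of S' S}"
proof (rule wf_subset)
  show "wf (inv_image {(M, N). M < N} sequent_measure)"
    using wf_less_multiset by (rule wf_inv_image)
  show "{(S', S). is_premise_of S' S} \<subseteq> inv_image {(M, N). M < N} sequent_measure"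
    using rule_inst_premise_measure_less by (auto simp: is_premise_of_def)
qed

lemma position_tree_prefix_closed:
  assumes "\<And>p i. T (p @ [i]) \<noteq> None \<Longrightarrow> T p \<noteq> None"
  shows "T (p @ q) \<noteq> None \<Longrightarrow> T p \<noteq> None"
proof (induction q rule: rev_induct)
  case (snoc i q)
  then show ?case using assms[of "p @ q" i] by simp
qed simp

lemma finite_position_tree_wf:
  fixes T :: "nat list \<Rightarrow> 'a option"
  assumes "wf r"
    and prefix_closed: "\<And>p i. T (p @ [i]) \<noteq> None \<Longrightarrow> T p \<noteq> None"
    and children: "\<And>p C. T p = Some C \<Longrightarrow>
      \<exists>n. \<forall>i D. T (p @ [i]) = Some D \<longrightarrow> i < n \<and> (D, C) \<in> r"
  shows "T p = Some C \<Longrightarrow> finite {q. T (p @ q) \<noteq> None}"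
proof (induction C arbitrary: p rule: wf_induct_rule[OF \<open>wf r\<close>])
  case (1 C)
  have descendant_prefix: "T (p' @ q) \<noteq> None \<Longrightarrow> T p' \<noteq> None" for p' q
    using position_tree_prefix_closed prefix_closed by blast
  obtain n where n: "\<And>i D. T (p @ [i]) = Some D \<Longrightarrow> i < n \<and> (D, C) \<in> r"
    using children[OF "1.prems"] by blast
  have subtrees_finite: "finite {q. T ((p @ [i]) @ q) \<noteq> None}" for i
  proof (cases "T (p @ [i])")
    case None
    then have "{q. T ((p @ [i]) @ q) \<noteq> None} = {}"
      using descendant_prefix[of "p @ [i]"] by blast
    then show ?thesis by simp
  next
    case (Some D)
    with n show ?thesis by (intro "1.IH") auto
  qed
  have "{q. T (p @ q) \<noteq> None} \<subseteq> insert [] (\<Union>i<n. Cons i ` {q. T ((p @ [i]) @ q) \<noteq> None})"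
  proof
    fix q assume q: "q \<in> {q. T (p @ q) \<noteq> None}"
    show "q \<in> insert [] (\<Union>i<n. Cons i ` {q. T ((p @ [i]) @ q) \<noteq> None})"
    proof (cases q)
      case (Cons i q')
      with q have "T (p @ [i]) \<noteq> None"
        using descendant_prefix[of "p @ [i]" q'] by simp
      with n have "i < n" by blast
      with q Cons show ?thesis by auto
    qed simp
  qed
  moreover have "finite (insert [] (\<Union>i<n. Cons i ` {q. T ((p @ [i]) @ q) \<noteq> None}))"
    using subtrees_finite by blast
  ultimately show ?case by (rule finite_subset)
qed

lemma search_tree_children_premises:
  assumes "search_tree S T" and "T p = Some C"
  shows "\<exists>n. \<forall>i D. T (p @ [i]) = Some D \<longrightarrow> i < n \<and> is_premise_of D C"
proof -
  from assms consider "\<forall>i. T (p @ [i]) = None"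
    | ps where "rule_inst ps C" "\<forall>i. T (p @ [i]) = (if i < length ps then Some (ps ! i) else None)"
    unfolding search_tree_def by blast
  then show ?thesis
  proof cases
    case 1
    then show ?thesis by auto
  next
    case 2
    then have "i < length ps \<and> is_premise_of D C" if "T (p @ [i]) = Some D" for i D
      using that unfolding is_premise_of_def by (metis nth_mem option.distinct(1) option.inject)
    then show ?thesis by blast
  qed
qed

theorem mainTheorem15:
  shows "(\<not> (\<exists>f :: nat \<Rightarrow> sequent. \<forall>k. is_premise_of (f (Suc k)) (f k)))
       \<and> (\<forall>S T. search_tree S T \<longrightarrow> finite {p. T p \<noteq> None})"
proof (intro conjI allI impI)
  show "\<not> (\<exists>f :: nat \<Rightarrow> sequent. \<forall>k. is_premise_of (f (Suc k)) (f k))"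
    using wf_is_premise_of unfolding wf_iff_no_infinite_down_chain by simp
next
  fix S T assume tree: "search_tree S T"
  have "finite {q. T ([] @ q) \<noteq> None}"
  proof (rule finite_position_tree_wf[OF wf_is_premise_of])
    show "T (p @ [i]) \<noteq> None \<Longrightarrow> T p \<noteq> None" for p i
      using tree unfolding search_tree_def by blast
    show "T p = Some C \<Longrightarrow>
        \<exists>n. \<forall>i D. T (p @ [i]) = Some D \<longrightarrow> i < n \<and> (D, C) \<in> {(S', S). is_premise_of S' S}" for p C
      using search_tree_children_premises[OF tree] by simp
    show "T [] = Some S" using tree unfolding search_tree_def by blast
  qed
  then show "finite {p. T p \<noteq> None}" by simp
qed

end
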